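(* Let $G$ be a finite simple graph and $vw$ an edge of $G$. Then $vw$ is exposed in $G$ if and only if $N_G(v)\cap N_G(w)$ is nonempty and induces a clique (complete subgraph) in $G$.
   Context: All graphs are finite, undirected, simple. $N_G(v)=\{w : vw\in E(G)\}$ is the open neighborhood. A facet edge of $G$ is an edge $xy$ such that $\{x,y\}$ is a maximal clique of $G$. An edge of $G$ is exposed if it is contained in a unique maximal clique of $G$ and it is not a facet edge. *)

theory Defs
  imports Main
begin

definition simple_graph :: "'a set \<Rightarrow> ('a \<Rightarrow> 'a \<Rightarrow> bool) \<Rightarrow> bool" where
  "simple_graph V E \<longleftrightarrow> finite V \<and> (\<forall>x y. E x y \<longrightarrow> x \<in> V \<and> y \<in> V)
     \<and> (\<forall>x y. E x y \<longrightarrow> E y x) \<and> (\<forall>x. \<not> E x x)"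

definition nbhd :: "'a set \<Rightarrow> ('a \<Rightarrow> 'a \<Rightarrow> bool) \<Rightarrow> 'a \<Rightarrow> 'a set" where
  "nbhd V E v = {w \<in> V. E v w}"

definition is_clique :: "'a set \<Rightarrow> ('a \<Rightarrow> 'a \<Rightarrow> bool) \<Rightarrow> 'a set \<Rightarrow> bool" where
  "is_clique V E K \<longleftrightarrow> K \<subseteq> V \<and> (\<forall>x\<in>K. \<forall>y\<in>K. x \<noteq> y \<longrightarrow> E x y)"

definition max_clique :: "'a set \<Rightarrow> ('a \<Rightarrow> 'a \<Rightarrow> bool) \<Rightarrow> 'a set \<Rightarrow> bool" where
  "max_clique V E K \<longleftrightarrow> is_clique V E K \<and> (\<forall>K'. is_clique V E K' \<and> K \<subseteq> K' \<longrightarrow> K' = K)"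

definition facet_edge :: "'a set \<Rightarrow> ('a \<Rightarrow> 'a \<Rightarrow> bool) \<Rightarrow> 'a \<Rightarrow> 'a \<Rightarrow> bool" where
  "facet_edge V E x y \<longleftrightarrow> E x y \<and> max_clique V E {x, y}"

definition exposed_edge :: "'a set \<Rightarrow> ('a \<Rightarrow> 'a \<Rightarrow> bool) \<Rightarrow> 'a \<Rightarrow> 'a \<Rightarrow> bool" where
  "exposed_edge V E x y \<longleftrightarrow> E x y \<and> (\<exists>!K. max_clique V E K \<and> {x, y} \<subseteq> K)
     \<and> \<not> facet_edge V E x y"

end

theory Submission
  imports Defs
begin

text \<open>Every clique containing the edge vw lies inside {v,w} together with the common
  neighbourhood C of v and w. Hence if C is empty, {v,w} is a maximal clique; and if C is a
  clique, {v,w} \<union> C is a clique absorbing every clique through vw, so it is the unique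
  maximal one. Conversely, every vertex of C extends vw to a triangle and so lies in some
  maximal clique through vw; if that clique is unique, all of C lies in it and is a clique.\<close>

lemma finite_clique_extends_to_max_clique:
  assumes "finite V" and "is_clique V E S"
  shows "\<exists>K. max_clique V E K \<and> S \<subseteq> K"
proof -
  let ?F = "{K. is_clique V E K \<and> S \<subseteq> K}"
  have "?F \<subseteq> Pow V" by (auto simp: is_clique_def)
  then have "finite ?F" using \<open>finite V\<close> by (meson finite_Pow_iff finite_subset)
  moreover have "?F \<noteq> {}" using assms(2) by blast
  ultimately obtain K where "K \<in> ?F" and "\<forall>K'\<in>?F. K \<le> K' \<longrightarrow> K = K'"
    by (metis finite_has_maximal)
  then have "max_clique V E K" "S \<subseteq> K" unfolding max_clique_def by auto
  then show ?thesis by blast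
qed

lemma clique_through_edge_subset_common_nbhd:
  assumes "is_clique V E K" and "{v, w} \<subseteq> K"
  shows "K \<subseteq> {v, w} \<union> (nbhd V E v \<inter> nbhd V E w)"
  using assms by (auto simp: is_clique_def nbhd_def)

lemma is_clique_edge_union_common_nbhd_subset:
  assumes "simple_graph V E" and "E v w"
    and "is_clique V E C" and "C \<subseteq> nbhd V E v \<inter> nbhd V E w"
  shows "is_clique V E ({v, w} \<union> C)"
  using assms unfolding is_clique_def nbhd_def simple_graph_def by blast

lemma max_clique_edge_union_common_nbhd:
  assumes "is_clique V E ({v, w} \<union> (nbhd V E v \<inter> nbhd V E w))"
  shows "max_clique V E ({v, w} \<union> (nbhd V E v \<inter> nbhd V E w))"
  unfolding max_clique_def
proof (intro conjI allI impI)
  fix K assume "is_clique V E K \<and> {v, w} \<union> (nbhd V E v \<inter> nbhd V E w) \<subseteq> K"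
  then show "K = {v, w} \<union> (nbhd V E v \<inter> nbhd V E w)"
    using clique_through_edge_subset_common_nbhd[of V E K v w] by blast
qed (fact assms)

lemma max_clique_through_edge_eq:
  assumes "is_clique V E ({v, w} \<union> (nbhd V E v \<inter> nbhd V E w))"
    and "max_clique V E K" and "{v, w} \<subseteq> K"
  shows "K = {v, w} \<union> (nbhd V E v \<inter> nbhd V E w)"
proof -
  have "K \<subseteq> {v, w} \<union> (nbhd V E v \<inter> nbhd V E w)"
    using assms(2,3) clique_through_edge_subset_common_nbhd[of V E K v w]
    by (simp add: max_clique_def)
  with assms(1,2) show ?thesis by (auto simp: max_clique_def)
qed

lemma facet_edge_iff_common_nbhd_empty:
  assumes "simple_graph V E" and "E v w"
  shows "facet_edge V E v w \<longleftrightarrow> nbhd V E v \<inter> nbhd V E w = {}"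
proof
  assume facet: "facet_edge V E v w"
  show "nbhd V E v \<inter> nbhd V E w = {}"
  proof (rule ccontr)
    assume "nbhd V E v \<inter> nbhd V E w \<noteq> {}"
    then obtain x where x: "x \<in> nbhd V E v \<inter> nbhd V E w" by blast
    then have "x \<notin> {v, w}"
      using assms(1) by (auto simp: nbhd_def simple_graph_def)
    have "is_clique V E {x}" using x by (simp add: is_clique_def nbhd_def)
    then have "is_clique V E ({v, w} \<union> {x})"
      using is_clique_edge_union_common_nbhd_subset[OF assms] x by blast
    with facet \<open>x \<notin> {v, w}\<close> show False
      unfolding facet_edge_def max_clique_def by blast
  qed
next
  assume "nbhd V E v \<inter> nbhd V E w = {}"
  moreover have "is_clique V E {v, w}"
    using is_clique_edge_union_common_nbhd_subset[OF assms, of "{}"]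
    by (simp add: is_clique_def)
  ultimately show "facet_edge V E v w"
    using assms(2) max_clique_edge_union_common_nbhd[of V E v w]
    by (simp add: facet_edge_def)
qed

lemma unique_max_clique_through_edge_iff_common_nbhd_clique:
  assumes "simple_graph V E" and "E v w"
  shows "(\<exists>!K. max_clique V E K \<and> {v, w} \<subseteq> K)
           \<longleftrightarrow> is_clique V E (nbhd V E v \<inter> nbhd V E w)"
proof
  assume "\<exists>!K. max_clique V E K \<and> {v, w} \<subseteq> K"
  then obtain K where K: "max_clique V E K" "{v, w} \<subseteq> K"
    and unique: "\<And>K'. max_clique V E K' \<Longrightarrow> {v, w} \<subseteq> K' \<Longrightarrow> K' = K"
    by metis
  have "x \<in> K" if x: "x \<in> nbhd V E v \<inter> nbhd V E w" for x
  proof -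
    have "is_clique V E {x}" using x by (simp add: is_clique_def nbhd_def)
    then have "is_clique V E ({v, w} \<union> {x})"
      using is_clique_edge_union_common_nbhd_subset[OF assms] x by blast
    moreover have "finite V" using assms(1) by (simp add: simple_graph_def)
    ultimately obtain K' where "max_clique V E K'" "{v, w} \<union> {x} \<subseteq> K'"
      using finite_clique_extends_to_max_clique by blast
    then show "x \<in> K" using unique[of K'] by blast
  qed
  then have "nbhd V E v \<inter> nbhd V E w \<subseteq> K" by blast
  then show "is_clique V E (nbhd V E v \<inter> nbhd V E w)"
    using K(1) unfolding max_clique_def is_clique_def by blast
next
  assume "is_clique V E (nbhd V E v \<inter> nbhd V E w)"
  then have clique: "is_clique V E ({v, w} \<union> (nbhd V E v \<inter> nbhd V E w))"
    using is_clique_edge_union_common_nbhd_subset[OF assms] by blast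
  show "\<exists>!K. max_clique V E K \<and> {v, w} \<subseteq> K"
  proof (rule ex1I)
    show "max_clique V E ({v, w} \<union> (nbhd V E v \<inter> nbhd V E w))
      \<and> {v, w} \<subseteq> {v, w} \<union> (nbhd V E v \<inter> nbhd V E w)"
      using max_clique_edge_union_common_nbhd[OF clique] by blast
  qed (use max_clique_through_edge_eq[OF clique] in blast)
qed

theorem lemma2p7:
  fixes V :: "'a set" and E :: "'a \<Rightarrow> 'a \<Rightarrow> bool" and v w :: 'a
  assumes "simple_graph V E" and "E v w"
  shows "exposed_edge V E v w \<longleftrightarrow>
           (nbhd V E v \<inter> nbhd V E w \<noteq> {} \<and> is_clique V E (nbhd V E v \<inter> nbhd V E w))"
  using facet_edge_iff_common_nbhd_empty[OF assms]
    unique_max_clique_through_edge_iff_common_nbhd_clique[OF assms] assms(2)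
  unfolding exposed_edge_def by blast

end
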